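(* Let $\Phi=\{\varphi_n\}_{n=1}^N\subseteq\mathbb{R}^M$ and let $\mathcal{A}\colon\mathbb{R}^M/\{\pm1\}\to\mathbb{R}^N$ be defined by $(\mathcal{A}(x))(n):=|\langle x,\varphi_n\rangle|^2$. For $x\in\mathbb{R}^M$, $\mathcal{A}^{-1}(\mathcal{A}(x))=\{\pm x\}$ if and only if for every $S\subseteq\{1,\ldots,N\}$, $$x\notin\big(\operatorname{span}(\Phi_S)^\perp\setminus\{0\}\big)+\big(\operatorname{span}(\Phi_{S^\mathrm{c}})^\perp\setminus\{0\}\big).$$ Consequently, $\mathcal{A}$ is almost injective if and only if almost every $x\in\mathbb{R}^M$ lies outside this Minkowski sum for all $S\subseteq\{1,\ldots,N\}$.
   Context: For $S\subseteq\{1,\ldots,N\}$, $\Phi_S:=\{\varphi_n\}_{n\in S}$ and $S^\mathrm{c}$ is the complement of $S$ in $\{1,\ldots,N\}$; the span of the empty set is $\{0\}$. The sum $A+B=\{a+b:a\in A,b\in B\}$ is the Minkowski sum. The map $\mathcal{A}$ is called almost injective if $\mathcal{A}^{-1}(\mathcal{A}(x))=\{\pm x\}$ for (Lebesgue) almost every $x\in\mathbb{R}^M$. *)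

theory Defs
  imports "HOL-Analysis.Analysis" "HOL-Library.Set_Algebras"
begin

text \<open>Intensity measurement map: (A x)(n) = |<x, phi_n>|^2 for n in {1..N}
  (set to 0 outside the index range, so that A x is a vector in R^N).\<close>
definition intensity_map :: "(nat \<Rightarrow> 'a::real_inner) \<Rightarrow> nat \<Rightarrow> 'a \<Rightarrow> (nat \<Rightarrow> real)" where
  "intensity_map \<phi> N x = (\<lambda>n. if n \<in> {1..N} then \<bar>x \<bullet> \<phi> n\<bar> ^ 2 else 0)"

definition bad_sum :: "(nat \<Rightarrow> 'a::real_inner) \<Rightarrow> nat \<Rightarrow> nat set \<Rightarrow> 'a set" where
  "bad_sum \<phi> N S =
     (orthogonal_comp (span (\<phi> ` S)) - {0}) + (orthogonal_comp (span (\<phi> ` ({1..N} - S))) - {0})"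

end

theory Submission
  imports Defs
begin

text \<open>Two vectors have the same intensity measurements iff their inner products with each
  \<open>\<phi> n\<close> agree up to sign. If \<open>x = u + v\<close> with \<open>u \<perp> \<Phi>\<^sub>S\<close> and \<open>v \<perp> \<Phi>\<^sub>S\<^sub>c\<close>, then \<open>v - u\<close>
  has the measurements of \<open>x\<close>, and equals \<open>\<plusminus>x\<close> only if \<open>u = 0\<close> or \<open>v = 0\<close>. Conversely, if
  \<open>y\<close> has the measurements of \<open>x\<close>, take \<open>S\<close> to be the indices where \<open>x - y\<close> is orthogonal
  to \<open>\<phi> n\<close>; then \<open>x = (x - y)/2 + (x + y)/2\<close> is such a decomposition, with both summands
  nonzero unless \<open>y = \<plusminus>x\<close>.\<close>

lemma orthogonal_comp_span_image_iff:
  fixes \<phi> :: "nat \<Rightarrow> 'a::real_inner"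
  shows "x \<in> orthogonal_comp (span (\<phi> ` S)) \<longleftrightarrow> (\<forall>n\<in>S. x \<bullet> \<phi> n = 0)"
proof
  assume "x \<in> orthogonal_comp (span (\<phi> ` S))"
  then show "\<forall>n\<in>S. x \<bullet> \<phi> n = 0"
    by (auto simp: orthogonal_comp_def orthogonal_def inner_commute dest!: bspec[OF _ span_base])
next
  assume perp: "\<forall>n\<in>S. x \<bullet> \<phi> n = 0"
  show "x \<in> orthogonal_comp (span (\<phi> ` S))"
    unfolding orthogonal_comp_def
  proof clarify
    fix y assume "y \<in> span (\<phi> ` S)"
    then have "orthogonal x y"
      by (rule orthogonal_to_span) (use perp in \<open>auto simp: orthogonal_def\<close>)
    then show "orthogonal y x" by (simp add: orthogonal_commute)
  qed
qed

lemma intensity_map_eq_iff: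
  "intensity_map \<phi> N y = intensity_map \<phi> N x \<longleftrightarrow>
     (\<forall>n\<in>{1..N}. y \<bullet> \<phi> n = x \<bullet> \<phi> n \<or> y \<bullet> \<phi> n = - (x \<bullet> \<phi> n))"
proof -
  have "intensity_map \<phi> N y = intensity_map \<phi> N x \<longleftrightarrow>
      (\<forall>n\<in>{1..N}. (y \<bullet> \<phi> n)\<^sup>2 = (x \<bullet> \<phi> n)\<^sup>2)"
    unfolding intensity_map_def fun_eq_iff by (auto simp: power2_abs)
  then show ?thesis by (simp add: power2_eq_iff)
qed

lemma intensity_map_uminus: "intensity_map \<phi> N (- x) = intensity_map \<phi> N x"
  by (simp add: intensity_map_eq_iff)

lemma bad_sum_imp_ambiguous:
  fixes \<phi> :: "nat \<Rightarrow> 'a::real_inner"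
  assumes "x \<in> bad_sum \<phi> N S"
  obtains y where "intensity_map \<phi> N y = intensity_map \<phi> N x" and "y \<notin> {x, -x}"
proof -
  obtain u v where u: "u \<in> orthogonal_comp (span (\<phi> ` S))" "u \<noteq> 0"
    and v: "v \<in> orthogonal_comp (span (\<phi> ` ({1..N} - S)))" "v \<noteq> 0" and x: "x = u + v"
    using assms unfolding bad_sum_def set_plus_def by blast
  have "\<forall>n\<in>S. u \<bullet> \<phi> n = 0" "\<forall>n\<in>{1..N} - S. v \<bullet> \<phi> n = 0"
    using u(1) v(1) by (simp_all add: orthogonal_comp_span_image_iff)
  then have "intensity_map \<phi> N (v - u) = intensity_map \<phi> N x"
    unfolding intensity_map_eq_iff x by (auto simp: inner_diff_left inner_add_left)
  moreover have "v - u \<notin> {x, -x}"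
    using x u(2) v(2) by (auto simp: algebra_simps simp flip: scaleR_2)
  ultimately show thesis by (rule that)
qed

lemma ambiguous_imp_bad_sum:
  fixes \<phi> :: "nat \<Rightarrow> 'a::real_inner"
  assumes same: "intensity_map \<phi> N y = intensity_map \<phi> N x" and y: "y \<notin> {x, -x}"
  defines "S \<equiv> {n\<in>{1..N}. (x - y) \<bullet> \<phi> n = 0}"
  shows "x \<in> bad_sum \<phi> N S"
proof -
  define u where "u = (1/2) *\<^sub>R (x - y)"
  define v where "v = (1/2) *\<^sub>R (x + y)"
  have "\<forall>n\<in>S. u \<bullet> \<phi> n = 0"
    unfolding S_def u_def by auto
  then have "u \<in> orthogonal_comp (span (\<phi> ` S))"
    by (simp add: orthogonal_comp_span_image_iff)
  moreover have "\<forall>n\<in>{1..N} - S. v \<bullet> \<phi> n = 0"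
    using same unfolding intensity_map_eq_iff S_def v_def
    by (auto simp: inner_diff_left inner_add_left)
  then have "v \<in> orthogonal_comp (span (\<phi> ` ({1..N} - S)))"
    by (simp add: orthogonal_comp_span_image_iff)
  moreover have "u \<noteq> 0" "v \<noteq> 0"
    using y unfolding u_def v_def
    by (auto simp del: scaleR_add_right scaleR_diff_right simp add: add_eq_0_iff2 add.commute)
  moreover have "x = u + v"
    unfolding u_def v_def by (simp flip: scaleR_add_right add: scaleR_2)
  ultimately show ?thesis
    unfolding bad_sum_def by blast
qed

lemma intensity_map_fibre_eq_iff:
  fixes \<phi> :: "nat \<Rightarrow> 'a::real_inner"
  shows "intensity_map \<phi> N -` {intensity_map \<phi> N x} = {x, -x}
           \<longleftrightarrow> (\<forall>S. S \<subseteq> {1..N} \<longrightarrow> x \<notin> bad_sum \<phi> N S)"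
proof
  assume fibre: "intensity_map \<phi> N -` {intensity_map \<phi> N x} = {x, -x}"
  show "\<forall>S. S \<subseteq> {1..N} \<longrightarrow> x \<notin> bad_sum \<phi> N S"
  proof (intro allI impI notI)
    fix S assume "x \<in> bad_sum \<phi> N S"
    then obtain y where "intensity_map \<phi> N y = intensity_map \<phi> N x" "y \<notin> {x, -x}"
      by (rule bad_sum_imp_ambiguous)
    with fibre show False by blast
  qed
next
  assume good: "\<forall>S. S \<subseteq> {1..N} \<longrightarrow> x \<notin> bad_sum \<phi> N S"
  have "y \<in> {x, -x}" if "intensity_map \<phi> N y = intensity_map \<phi> N x" for y
  proof (rule ccontr)
    assume "y \<notin> {x, -x}"
    then have "x \<in> bad_sum \<phi> N {n\<in>{1..N}. (x - y) \<bullet> \<phi> n = 0}"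
      by (rule ambiguous_imp_bad_sum[OF that])
    moreover have "{n\<in>{1..N}. (x - y) \<bullet> \<phi> n = 0} \<subseteq> {1..N}"
      by blast
    ultimately show False
      using good by blast
  qed
  then show "intensity_map \<phi> N -` {intensity_map \<phi> N x} = {x, -x}"
    using intensity_map_uminus by auto
qed

theorem lemma9:
  fixes \<phi> :: "nat \<Rightarrow> 'a::euclidean_space" and N :: nat
  shows "(\<forall>x::'a. (intensity_map \<phi> N -` {intensity_map \<phi> N x} = {x, -x})
              \<longleftrightarrow> (\<forall>S. S \<subseteq> {1..N} \<longrightarrow> x \<notin> bad_sum \<phi> N S))
       \<and> ((AE x in lebesgue. intensity_map \<phi> N -` {intensity_map \<phi> N x} = {x, -x})
              \<longleftrightarrow> (AE x in lebesgue. \<forall>S. S \<subseteq> {1..N} \<longrightarrow> x \<notin> bad_sum \<phi> N S))"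
  using intensity_map_fibre_eq_iff[of \<phi> N] by simp

end
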